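(* Let $n\ge 1$ and let $P$ be the $n\times n$ matrix with entries $P_{ij}=\frac{1}{i}$ if $j\ge n-i+1$ and $P_{ij}=0$ otherwise (so row $i$ has the value $1/i$ in its last $i$ positions and zeros elsewhere). Then the eigenvalues of $P$ are exactly $\lambda_i(P)=\frac{(-1)^{i+1}}{i}$ for $i=1,\ldots,n$.
   Context: $P$ is a row-stochastic "anti-lower-triangular" matrix: the first row is $(0,\dots,0,1)$, the second is $(0,\dots,0,\tfrac12,\tfrac12)$, ..., the last row is $(\tfrac1n,\dots,\tfrac1n)$. *)

theory Defs
  imports Complex_Main "Jordan_Normal_Form.Char_Poly"
begin

text \<open>The n x n matrix P (0-based indices i, j < n): row i (paper's row i+1)
  has the value 1/(i+1) in its last i+1 positions, i.e. where i + j >= n - 1.\<close>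
definition antiP :: "nat \<Rightarrow> real mat" where
  "antiP n = mat n n (\<lambda>(i, j). if n - 1 \<le> i + j then 1 / real (i + 1) else 0)"

end

theory Submission
  imports Defs
begin

text \<open>Let \<open>B\<close> be the lower triangular Pascal matrix \<open>B\<^sub>i\<^sub>k = (i choose k)\<close>.
  The matrix \<open>P\<close> is the product \<open>C J\<close> of the running-mean matrix \<open>C\<close> (row \<open>i\<close>
  averages the first \<open>i + 1\<close> coordinates) and the exchange matrix \<open>J\<close>. The hockey-stick
  identity gives \<open>C B = B D\<close> with \<open>D = diag(1, 1/2, \<dots>, 1/n)\<close>, and
  \<open>J B = B U\<close> for an upper triangular \<open>U\<close> with diagonal \<open>1, -1, 1, \<dots>\<close>. Hence
  \<open>P B = B (D U)\<close>, so \<open>P\<close> is similar to the upper triangular matrix \<open>D U\<close>, whose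
  diagonal \<open>(-1)\<^sup>l / (l + 1)\<close> is the spectrum.\<close>

text \<open>Comparing coefficients of \<open>x\<^sup>k\<close> in
  \<open>(1 + x)\<^bsup>N - i\<^esup> = (\<Sum>l. (i choose l) (-x)\<^sup>l (1 + x)\<^bsup>N - l\<^esup>)\<close>.\<close>

lemma binomial_diff_alternating_sum:
  assumes "i \<le> N"
  shows "(of_nat ((N - i) choose k) :: 'a :: comm_ring_1)
           = (\<Sum>l\<le>k. (-1)^l * of_nat (i choose l) * of_nat ((N - l) choose (k - l)))"
  using assms
proof (induction i arbitrary: N k)
  case 0
  have "(\<Sum>l\<le>k. (-1)^l * of_nat (0 choose l) * of_nat ((N - l) choose (k - l)) :: 'a)
      = (\<Sum>l\<le>k. if l = 0 then of_nat (N choose k) else 0)"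
    by (rule sum.cong) (auto simp: gr0_conv_Suc)
  then show ?case by simp
next
  case (Suc i)
  let ?S = "\<lambda>i N k. (\<Sum>l\<le>k. (-1)^l * of_nat (i choose l) * of_nat ((N - l) choose (k - l)) :: 'a)"
  show ?case
  proof (cases k)
    case 0
    then show ?thesis by simp
  next
    case (Suc k')
    have shift: "?S j N (Suc k') = of_nat (N choose Suc k')
        - (\<Sum>l\<le>k'. (-1)^l * of_nat (j choose Suc l) * of_nat ((N - Suc l) choose (k' - l)))" for j
      by (simp add: sum.atMost_Suc_shift sum_negf del: sum.atMost_Suc)
    have pascal: "(\<Sum>l\<le>k'. (-1)^l * of_nat (Suc i choose Suc l) * of_nat ((N - Suc l) choose (k' - l)) :: 'a)
        = ?S i (N - 1) k'
          + (\<Sum>l\<le>k'. (-1)^l * of_nat (i choose Suc l) * of_nat ((N - Suc l) choose (k' - l)))"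
      by (simp add: sum.distrib[symmetric] algebra_simps)
    have "?S (Suc i) N (Suc k') = of_nat (N choose Suc k')
        - (\<Sum>l\<le>k'. (-1)^l * of_nat (Suc i choose Suc l) * of_nat ((N - Suc l) choose (k' - l)))"
      by (rule shift)
    also have "\<dots> = ?S i N (Suc k') - ?S i (N - 1) k'"
      unfolding pascal shift[of i] by (simp add: algebra_simps)
    also have "\<dots> = of_nat ((N - i) choose Suc k') - of_nat ((N - 1 - i) choose k')"
      using Suc.IH[of N "Suc k'"] Suc.IH[of "N - 1" k'] Suc.prems by simp
    finally have "?S (Suc i) N k = of_nat ((N - i) choose Suc k') - of_nat ((N - 1 - i) choose k')"
      using Suc by simp
    moreover have "N - i = Suc (N - Suc i)"
      using Suc.prems by simp
    ultimately show ?thesis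
      using Suc by simp
  qed
qed

lemma similar_mat_if_mult_eq:
  fixes A B T :: "'a :: field mat"
  assumes carrier: "A \<in> carrier_mat n n" "B \<in> carrier_mat n n" "T \<in> carrier_mat n n"
    and "det B \<noteq> 0" and "A * B = B * T"
  shows "similar_mat A T"
proof -
  have "B \<in> Units (ring_mat TYPE('a) n b)"
    by (rule det_non_zero_imp_unit[OF carrier(2) \<open>det B \<noteq> 0\<close>])
  then obtain Q where Q: "Q \<in> carrier_mat n n" "Q * B = 1\<^sub>m n" "B * Q = 1\<^sub>m n"
    by (auto simp: Units_def ring_mat_def)
  have "A = A * (B * Q)"
    using Q carrier by simp
  also have "\<dots> = A * B * Q"
    using assoc_mult_mat[OF carrier(1,2) Q(1)] by simp
  also have "\<dots> = B * T * Q"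
    using \<open>A * B = B * T\<close> by simp
  finally show ?thesis
    using Q carrier by (intro similar_matI[where P = B and Q = Q]) auto
qed

lemma eigenvalues_of_real_mat_char_poly_prod:
  fixes A :: "real mat"
  assumes A: "A \<in> carrier_mat n n" and "finite I"
    and char_poly: "char_poly A = (\<Prod>i\<in>I. [:- c i, 1:])"
  shows "{k. eigenvalue (map_mat complex_of_real A) k} = (\<lambda>i. complex_of_real (c i)) ` I"
proof -
  interpret of_real_poly: map_poly_comm_ring_hom complex_of_real ..
  have "char_poly (map_mat complex_of_real A) = (\<Prod>i\<in>I. [:- complex_of_real (c i), 1:])"
    unfolding of_real_hom.char_poly_hom[OF A] char_poly of_real_poly.hom_prod by simp
  then have "eigenvalue (map_mat complex_of_real A) k \<longleftrightarrow> (\<Prod>i\<in>I. k - complex_of_real (c i)) = 0" for k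
    using eigenvalue_root_char_poly[of "map_mat complex_of_real A" n] A
    by (simp add: poly_prod)
  then show ?thesis
    using \<open>finite I\<close> by auto
qed

definition pascal_mat :: "nat \<Rightarrow> real mat" where
  "pascal_mat n = mat n n (\<lambda>(i, k). real (i choose k))"

definition running_mean_mat :: "nat \<Rightarrow> real mat" where
  "running_mean_mat n = mat n n (\<lambda>(i, k). if k \<le> i then 1 / real (i + 1) else 0)"

definition exchange_mat :: "nat \<Rightarrow> real mat" where
  "exchange_mat n = mat n n (\<lambda>(i, k). if i + k = n - 1 then 1 else 0)"

definition harmonic_diag_mat :: "nat \<Rightarrow> real mat" where
  "harmonic_diag_mat n = mat n n (\<lambda>(i, k). if i = k then 1 / real (k + 1) else 0)"

definition pascal_exchange_mat :: "nat \<Rightarrow> real mat" where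
  "pascal_exchange_mat n =
     mat n n (\<lambda>(l, k). if l \<le> k then (-1)^l * real ((n - 1 - l) choose (k - l)) else 0)"

definition antiP_triangular :: "nat \<Rightarrow> real mat" where
  "antiP_triangular n =
     mat n n (\<lambda>(l, k). if l \<le> k then (-1)^l * real ((n - 1 - l) choose (k - l)) / real (l + 1) else 0)"

lemma carrier_mats [simp]:
  "pascal_mat n \<in> carrier_mat n n" "running_mean_mat n \<in> carrier_mat n n"
  "exchange_mat n \<in> carrier_mat n n" "harmonic_diag_mat n \<in> carrier_mat n n"
  "pascal_exchange_mat n \<in> carrier_mat n n" "antiP_triangular n \<in> carrier_mat n n"
  "antiP n \<in> carrier_mat n n"
  by (simp_all add: pascal_mat_def running_mean_mat_def exchange_mat_def harmonic_diag_mat_def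
      pascal_exchange_mat_def antiP_triangular_def antiP_def)

lemma sum_atLeastLessThan_eq_atMost:
  "i < (n :: nat) \<Longrightarrow> (\<And>m. i < m \<Longrightarrow> f m = 0) \<Longrightarrow> (\<Sum>m\<in>{0..<n}. f m) = (\<Sum>m\<le>i. f m :: 'a :: comm_monoid_add)"
  by (rule sum.mono_neutral_right) (auto simp: not_le)

context
  notes pascal_mat_def [simp] running_mean_mat_def [simp] exchange_mat_def [simp]
    harmonic_diag_mat_def [simp] pascal_exchange_mat_def [simp] antiP_triangular_def [simp]
    antiP_def [simp]
begin

lemma antiP_eq_running_mean_times_exchange:
  "antiP n = running_mean_mat n * exchange_mat n"
proof (rule eq_matI)
  fix i j assume "i < dim_row (running_mean_mat n * exchange_mat n)"
    "j < dim_col (running_mean_mat n * exchange_mat n)"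
  then have i: "i < n" and j: "j < n"
    by auto
  have "(running_mean_mat n * exchange_mat n) $$ (i, j)
      = (\<Sum>m\<in>{0..<n}. (if m \<le> i then 1 / real (i + 1) else 0) * (if m + j = n - 1 then 1 else 0))"
    using i j by (simp add: scalar_prod_def)
  also have "\<dots> = (\<Sum>m\<in>{0..<n}. if m = n - 1 - j then (if m \<le> i then 1 / real (i + 1) else 0) else 0)"
    using j by (intro sum.cong) auto
  finally show "antiP n $$ (i, j) = (running_mean_mat n * exchange_mat n) $$ (i, j)"
    using i j by auto
qed auto

lemma running_mean_times_pascal:
  "running_mean_mat n * pascal_mat n = pascal_mat n * harmonic_diag_mat n"
proof (rule eq_matI)
  fix i j assume "i < dim_row (pascal_mat n * harmonic_diag_mat n)"
    "j < dim_col (pascal_mat n * harmonic_diag_mat n)"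
  then have i: "i < n" and j: "j < n"
    by auto
  have "(running_mean_mat n * pascal_mat n) $$ (i, j)
      = (\<Sum>m\<in>{0..<n}. (if m \<le> i then 1 / real (i + 1) else 0) * real (m choose j))"
    using i j by (simp add: scalar_prod_def)
  also have "\<dots> = (\<Sum>m\<le>i. real (m choose j)) / real (i + 1)"
    using i by (subst sum_atLeastLessThan_eq_atMost[of i]) (auto simp: sum_divide_distrib)
  also have "\<dots> = real (Suc i choose Suc j) / real (i + 1)"
    by (metis of_nat_sum sum_choose_upper)
  also have "\<dots> = real (i choose j) / real (j + 1)"
  proof -
    have "real (Suc i) * real (i choose j) = real (Suc i choose Suc j) * real (Suc j)"
      by (metis Suc_times_binomial_eq of_nat_mult)
    then show ?thesis
      by (simp add: field_simps)
  qed
  also have "\<dots> = (\<Sum>m\<in>{0..<n}. real (i choose m) * (if m = j then 1 / real (j + 1) else 0))"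
    using j by (simp add: if_distrib[of "(*) _"] cong: if_cong)
  also have "\<dots> = (pascal_mat n * harmonic_diag_mat n) $$ (i, j)"
    using i j by (simp add: scalar_prod_def)
  finally show "(running_mean_mat n * pascal_mat n) $$ (i, j) = (pascal_mat n * harmonic_diag_mat n) $$ (i, j)" .
qed auto

lemma exchange_times_pascal:
  "exchange_mat n * pascal_mat n = pascal_mat n * pascal_exchange_mat n"
proof (rule eq_matI)
  fix i j assume "i < dim_row (pascal_mat n * pascal_exchange_mat n)"
    "j < dim_col (pascal_mat n * pascal_exchange_mat n)"
  then have i: "i < n" and j: "j < n"
    by auto
  have "(exchange_mat n * pascal_mat n) $$ (i, j)
      = (\<Sum>m\<in>{0..<n}. (if i + m = n - 1 then 1 else 0) * real (m choose j))"
    using i j by (simp add: scalar_prod_def)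
  also have "\<dots> = (\<Sum>m\<in>{0..<n}. if m = n - 1 - i then real (m choose j) else 0)"
    using i by (intro sum.cong) auto
  also have "\<dots> = real ((n - 1 - i) choose j)"
    using i by simp
  also have "\<dots> = (\<Sum>l\<le>j. (-1)^l * real (i choose l) * real ((n - 1 - l) choose (j - l)))"
    using i by (intro binomial_diff_alternating_sum) simp
  also have "\<dots> = (\<Sum>l\<in>{0..<n}. real (i choose l)
                     * (if l \<le> j then (-1)^l * real ((n - 1 - l) choose (j - l)) else 0))"
    using j by (subst sum_atLeastLessThan_eq_atMost[of j]) (auto intro!: sum.cong)
  also have "\<dots> = (pascal_mat n * pascal_exchange_mat n) $$ (i, j)"
    using i j by (simp add: scalar_prod_def)
  finally show "(exchange_mat n * pascal_mat n) $$ (i, j) = (pascal_mat n * pascal_exchange_mat n) $$ (i, j)" .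
qed auto

lemma harmonic_diag_times_pascal_exchange:
  "harmonic_diag_mat n * pascal_exchange_mat n = antiP_triangular n"
proof (rule eq_matI)
  fix i j assume "i < dim_row (antiP_triangular n)" "j < dim_col (antiP_triangular n)"
  then have i: "i < n" and j: "j < n"
    by auto
  have "(harmonic_diag_mat n * pascal_exchange_mat n) $$ (i, j)
      = (\<Sum>m\<in>{0..<n}. (if i = m then 1 / real (m + 1) else 0)
           * (if m \<le> j then (-1)^m * real ((n - 1 - m) choose (j - m)) else 0))"
    using i j by (simp add: scalar_prod_def)
  also have "\<dots> = (\<Sum>m\<in>{0..<n}. if m = i then 1 / real (m + 1)
           * (if m \<le> j then (-1)^m * real ((n - 1 - m) choose (j - m)) else 0) else 0)"
    by (intro sum.cong) auto
  finally show "(harmonic_diag_mat n * pascal_exchange_mat n) $$ (i, j) = antiP_triangular n $$ (i, j)"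
    using i j by simp
qed auto

lemma det_pascal_mat: "det (pascal_mat n) = 1"
proof -
  have "det (pascal_mat n) = prod_list (diag_mat (pascal_mat n))"
    by (rule det_lower_triangular[of n]) auto
  then show ?thesis
    by (simp add: prod_list_diag_prod)
qed

end

lemma similar_antiP_triangular: "similar_mat (antiP n) (antiP_triangular n)"
proof (rule similar_mat_if_mult_eq[where n = n])
  let ?C = "running_mean_mat n" and ?J = "exchange_mat n" and ?B = "pascal_mat n"
    and ?D = "harmonic_diag_mat n" and ?U = "pascal_exchange_mat n"
  have "antiP n * ?B = ?C * (?J * ?B)"
    by (simp add: antiP_eq_running_mean_times_exchange assoc_mult_mat[of _ n n _ n _ n])
  also have "\<dots> = (?C * ?B) * ?U"
    by (simp add: exchange_times_pascal assoc_mult_mat[of _ n n _ n _ n])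
  also have "\<dots> = ?B * (?D * ?U)"
    by (simp add: running_mean_times_pascal assoc_mult_mat[of _ n n _ n _ n])
  finally show "antiP n * ?B = ?B * antiP_triangular n"
    by (simp add: harmonic_diag_times_pascal_exchange)
qed (auto simp: det_pascal_mat)

lemma char_poly_antiP_triangular:
  "char_poly (antiP_triangular n) = (\<Prod>l = 0..<n. [:- ((-1)^l / real (l + 1)), 1:])"
proof -
  have "char_poly (antiP_triangular n) = (\<Prod>a \<leftarrow> diag_mat (antiP_triangular n). [:- a, 1:])"
    by (rule char_poly_upper_triangular[of _ n]) (auto simp: upper_triangular_def antiP_triangular_def)
  then show ?thesis
    by (simp add: diag_mat_def prod.list_conv_set_nth antiP_triangular_def)
qed

theorem proposition1:
  fixes n :: nat
  assumes "n \<ge> 1"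
  shows "char_poly (antiP n) = (\<Prod>i = 1..n. [: - ((-1) ^ (i + 1) / real i), 1 :])
       \<and> {k :: complex. eigenvalue (map_mat complex_of_real (antiP n)) k}
           = {complex_of_real ((-1) ^ (i + 1) / real i) | i. 1 \<le> i \<and> i \<le> n}"
proof
  have "char_poly (antiP n) = (\<Prod>l = 0..<n. [:- ((-1)^l / real (l + 1)), 1:])"
    using char_poly_similar[OF similar_antiP_triangular] char_poly_antiP_triangular by simp
  also have "\<dots> = (\<Prod>i = Suc 0..<Suc n. [:- ((-1) ^ (i + 1) / real i), 1:])"
    by (subst prod.shift_bounds_Suc_ivl) simp
  also have "{Suc 0..<Suc n} = {1..n}"
    by auto
  finally show char_poly: "char_poly (antiP n) = (\<Prod>i = 1..n. [: - ((-1) ^ (i + 1) / real i), 1 :])" .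
  have "{k. eigenvalue (map_mat complex_of_real (antiP n)) k}
      = (\<lambda>i. complex_of_real ((-1) ^ (i + 1) / real i)) ` {1..n}"
    using char_poly by (intro eigenvalues_of_real_mat_char_poly_prod[where n = n]) simp_all
  then show "{k. eigenvalue (map_mat complex_of_real (antiP n)) k}
      = {complex_of_real ((-1) ^ (i + 1) / real i) | i. 1 \<le> i \<and> i \<le> n}"
    by auto
qed

end
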